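(* Let there be $p$ predictors $X_1,\dots,X_p$ and let $\widehat{m}^{(1)},\dots,\widehat{m}^{(B)}\subseteq\{1,\dots,p\}$ be bootstrap models, i.e. independent realizations of a random selected model. Fix a width $w\in\{0,\dots,p\}$. Let $\{\widehat{m}_{L,1},\widehat{m}_{U,1}\}$ be a maximizer of $\widehat{r}(m_1,m_2)$ over all pairs with $m_1\subseteq m_2\subseteq\{1,\dots,p\}$ and $|m_2|-|m_1|=w$ (Algorithm 1). Let $\overline{\pi}_j=\frac1B\sum_{b=1}^B I(j\in\widehat{m}^{(b)})$, let $(u_1,\dots,u_p)$ be the ordering of $\{1,\dots,p\}$ with $\overline{\pi}_{u_1}>\cdots>\overline{\pi}_{u_p}$ (assuming no ties), and let $\{\widehat{m}_{L,2},\widehat{m}_{U,2}\}=\{\{u_1,\dots,u_{k^\ast}\},\{u_1,\dots,u_{k^\ast+w}\}\}$ where $k^\ast$ maximizes $\widehat{r}(\{u_1,\dots,u_k\},\{u_1,\dots,u_{k+w}\})$ over $0\le k\le p-w$ (Algorithm 2). Assume (A.3): the events $I(X_j)$, $j=1,\dots,p$, are mutually independent, where $I(X_j)$ denotes the event that $X_j$ is selected in the model (i.e. $j$ belongs to the random selected model). Then, as $B\to\infty$, $$\left|\widehat{r}(\widehat{m}_{L,1},\widehat{m}_{U,1})-\widehat{r}(\widehat{m}_{L,2},\widehat{m}_{U,2})\right|=o_p(1).$$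
   Context: Models are identified with index sets of predictors, i.e. subsets of $\{1,\dots,p\}$; $|m|$ denotes cardinality. For nested models $m_1\subseteq m_2$, the bootstrap coverage rate is $\widehat{r}(m_1,m_2)=\frac1B\sum_{b=1}^B I(m_1\subseteq\widehat{m}^{(b)}\subseteq m_2)$, with $I(\cdot)$ the indicator function. *)

theory Defs
  imports "HOL-Probability.Probability"
begin

definition cov_rate :: "nat \<Rightarrow> (nat \<Rightarrow> nat set) \<Rightarrow> nat set \<Rightarrow> nat set \<Rightarrow> real" where
  "cov_rate B ms m1 m2 = (\<Sum>b<B. if m1 \<subseteq> ms b \<and> ms b \<subseteq> m2 then 1 else 0) / real B"

definition incl_freq :: "nat \<Rightarrow> (nat \<Rightarrow> nat set) \<Rightarrow> nat \<Rightarrow> real" where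
  "incl_freq B ms j = (\<Sum>b<B. if j \<in> ms b then 1 else 0) / real B"

definition boot_sample :: "nat set pmf \<Rightarrow> nat \<Rightarrow> (nat \<Rightarrow> nat set) pmf" where
  "boot_sample D B = Pi_pmf {..<B} {} (\<lambda>_. D)"

end

theory Submission
  imports Defs "HOL-Real_Asymp.Real_Asymp"
begin

text \<open>
  Write \<open>\<pi> j\<close> for the probability that predictor \<open>j\<close> is selected. Under independence (A.3)
  the probability that the selected model lies between \<open>m1 \<subseteq> m2\<close> is
  \<open>\<Prod>j\<in>m1. \<pi> j\<close> times \<open>\<Prod>j\<notin>m2. 1 - \<pi> j\<close>, and among pairs of width \<open>w\<close> this is maximised
  by two prefixes of any ranking of the predictors by decreasing \<open>\<pi>\<close>. By Hoeffding's inequality,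
  with probability tending to one all of the finitely many empirical coverage rates and inclusion
  frequencies are simultaneously within \<open>\<delta>\<close> of their means; for \<open>\<delta>\<close> below half the smallest gap
  between distinct \<open>\<pi> j\<close>, the empirical ranking is then a ranking by decreasing \<open>\<pi>\<close>. So the
  prefix pair searched by Algorithm 2 is at least as good in truth as the pair of Algorithm 1, and
  their empirical coverage rates differ by less than \<open>2 * \<delta>\<close>.
\<close>

definition emp_prob :: "nat \<Rightarrow> (nat \<Rightarrow> 'a) \<Rightarrow> 'a set \<Rightarrow> real" where
  "emp_prob B xs A = (\<Sum>b<B. if xs b \<in> A then 1 else 0) / real B"

lemma cov_rate_eq_emp_prob: "cov_rate B ms m1 m2 = emp_prob B ms {m. m1 \<subseteq> m \<and> m \<subseteq> m2}"
  by (simp add: cov_rate_def emp_prob_def)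

lemma incl_freq_eq_emp_prob: "incl_freq B ms j = emp_prob B ms {m. j \<in> m}"
  by (simp add: incl_freq_def emp_prob_def)

definition coverage_events :: "nat \<Rightarrow> nat set set set" where
  "coverage_events p =
     (\<lambda>(m1, m2). {m. m1 \<subseteq> m \<and> m \<subseteq> m2}) ` (Pow {1..p} \<times> Pow {1..p}) \<union> (\<lambda>j. {m. j \<in> m}) ` {1..p}"

lemma finite_coverage_events: "finite (coverage_events p)"
  by (simp add: coverage_events_def)

lemma map_pmf_indicator_eq_bernoulli_pmf:
  "map_pmf (\<lambda>x. x \<in> A) D = bernoulli_pmf (measure_pmf.prob D A)"
proof (rule pmf_eqI)
  fix b :: bool
  have "measure_pmf.prob D (- A) = 1 - measure_pmf.prob D A"
    using measure_pmf.prob_compl[of A D] by (simp add: Compl_eq_Diff_UNIV)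
  then show "pmf (map_pmf (\<lambda>x. x \<in> A) D) b = pmf (bernoulli_pmf (measure_pmf.prob D A)) b"
    by (cases b) (simp_all add: pmf_map vimage_def Collect_neg_eq)
qed

lemma map_pmf_count_Pi_pmf_eq_binomial_pmf:
  "map_pmf (\<lambda>xs. card {b\<in>{..<B}. xs b \<in> A}) (Pi_pmf {..<B} dflt (\<lambda>_. D))
     = binomial_pmf B (measure_pmf.prob D A)"
proof -
  let ?q = "measure_pmf.prob D A"
  have "binomial_pmf B ?q
      = map_pmf (\<lambda>f. card {b\<in>{..<B}. f b}) (Pi_pmf {..<B} (dflt \<in> A) (\<lambda>_. bernoulli_pmf ?q))"
    by (rule binomial_pmf_altdef') auto
  also have "Pi_pmf {..<B} (dflt \<in> A) (\<lambda>_. bernoulli_pmf ?q)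
      = map_pmf (\<lambda>xs. (\<lambda>x. x \<in> A) \<circ> xs) (Pi_pmf {..<B} dflt (\<lambda>_. D))"
    by (simp only: map_pmf_indicator_eq_bernoulli_pmf[symmetric]) (rule Pi_pmf_map, auto)
  finally show ?thesis
    by (simp add: pmf.map_comp o_def)
qed

lemma emp_prob_deviation_le_Hoeffding:
  assumes "B \<ge> 1" "d \<ge> 0"
  shows "measure_pmf.prob (Pi_pmf {..<B} dflt (\<lambda>_. D))
           {xs. d \<le> \<bar>emp_prob B xs A - measure_pmf.prob D A\<bar>}
         \<le> 2 * exp (-2 * real B * d\<^sup>2)"
proof -
  let ?q = "measure_pmf.prob D A"
  have count: "(\<Sum>b<B. if xs b \<in> A then 1 else 0) = real (card {b\<in>{..<B}. xs b \<in> A})" for xs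
    by (simp add: sum.If_cases Int_def)
  have "measure_pmf.prob (Pi_pmf {..<B} dflt (\<lambda>_. D))
          {xs. d \<le> \<bar>emp_prob B xs A - ?q\<bar>}
      = measure_pmf.prob (map_pmf (\<lambda>xs. card {b\<in>{..<B}. xs b \<in> A}) (Pi_pmf {..<B} dflt (\<lambda>_. D)))
          {k. d \<le> \<bar>real k / real B - ?q\<bar>}"
    by (simp add: measure_map_pmf vimage_def emp_prob_def count)
  also have "\<dots> = measure_pmf.prob (binomial_pmf B ?q) {k. d \<le> \<bar>real k / real B - ?q\<bar>}"
    by (simp only: map_pmf_count_Pi_pmf_eq_binomial_pmf)
  also have "\<dots> \<le> 2 * exp (real_of_int (-2 * int B) * d\<^sup>2)"
    by (rule binomial_distribution.prob_abs_ge') (use assms in \<open>auto simp: binomial_distribution_def\<close>)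
  finally show ?thesis
    by simp
qed

lemma emp_prob_deviation_tendsto_0:
  assumes "d > 0"
  shows "(\<lambda>B. measure_pmf.prob (Pi_pmf {..<B} dflt (\<lambda>_. D))
           {xs. d \<le> \<bar>emp_prob B xs A - measure_pmf.prob D A\<bar>}) \<longlonglongrightarrow> 0"
proof (rule Lim_null_comparison)
  show "(\<lambda>B. 2 * exp (-2 * real B * d\<^sup>2)) \<longlonglongrightarrow> 0"
    using assms by real_asymp
  show "\<forall>\<^sub>F B in sequentially. norm (measure_pmf.prob (Pi_pmf {..<B} dflt (\<lambda>_. D))
           {xs. d \<le> \<bar>emp_prob B xs A - measure_pmf.prob D A\<bar>}) \<le> 2 * exp (-2 * real B * d\<^sup>2)"
    using emp_prob_deviation_le_Hoeffding[of _ d] assms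
    by (intro eventually_sequentiallyI[of 1]) auto
qed

lemma uniform_emp_prob_deviation_tendsto_0:
  assumes "finite \<A>" "d > 0"
  shows "(\<lambda>B. measure_pmf.prob (Pi_pmf {..<B} dflt (\<lambda>_. D))
           {xs. \<exists>A\<in>\<A>. d \<le> \<bar>emp_prob B xs A - measure_pmf.prob D A\<bar>}) \<longlonglongrightarrow> 0"
proof (rule Lim_null_comparison)
  let ?P = "\<lambda>B. measure_pmf.prob (Pi_pmf {..<B} dflt (\<lambda>_. D))"
  let ?dev = "\<lambda>B A. {xs. d \<le> \<bar>emp_prob B xs A - measure_pmf.prob D A\<bar>}"
  show "(\<lambda>B. \<Sum>A\<in>\<A>. ?P B (?dev B A)) \<longlonglongrightarrow> 0"
    using assms by (intro tendsto_null_sum emp_prob_deviation_tendsto_0)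
  have "{xs. \<exists>A\<in>\<A>. d \<le> \<bar>emp_prob B xs A - measure_pmf.prob D A\<bar>} = (\<Union>A\<in>\<A>. ?dev B A)" for B
    by auto
  moreover have "?P B (\<Union>A\<in>\<A>. ?dev B A) \<le> (\<Sum>A\<in>\<A>. ?P B (?dev B A))" for B
    using assms by (intro measure_pmf.finite_measure_subadditive_finite) auto
  ultimately show "\<forall>\<^sub>F B in sequentially.
      norm (?P B {xs. \<exists>A\<in>\<A>. d \<le> \<bar>emp_prob B xs A - measure_pmf.prob D A\<bar>})
        \<le> (\<Sum>A\<in>\<A>. ?P B (?dev B A))"
    by (intro always_eventually allI) simp
qed

lemma prob_Inter_indep_events_or_compl:
  fixes D :: "'a pmf" and F :: "'i \<Rightarrow> 'a set"
  assumes indep: "prob_space.indep_events (measure_pmf D) F I" and J: "finite J" "J \<subseteq> I"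
  shows "measure_pmf.prob D (\<Inter>j\<in>J. if j \<in> K then F j else - F j)
       = (\<Prod>j\<in>J. if j \<in> K then measure_pmf.prob D (F j) else 1 - measure_pmf.prob D (F j))"
proof (cases "J = {}")
  case False
  have "prob_space.indep_sets (measure_pmf D) (\<lambda>j. {F j}) I"
    using indep by (simp add: prob_space.indep_events_def_alt[OF measure_pmf.prob_space_axioms])
  then have "prob_space.indep_sets (measure_pmf D) (\<lambda>j. sigma_sets UNIV {F j}) I"
    using prob_space.indep_sets_sigma[OF measure_pmf.prob_space_axioms] by (force simp: Int_stable_def)
  moreover have "(\<lambda>j. if j \<in> K then F j else - F j) \<in> (\<Pi> j\<in>J. sigma_sets UNIV {F j})"
    using sigma_sets.Compl[of "F _" UNIV] by (auto simp: Compl_eq_Diff_UNIV)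
  ultimately have "measure_pmf.prob D (\<Inter>j\<in>J. if j \<in> K then F j else - F j)
       = (\<Prod>j\<in>J. measure_pmf.prob D (if j \<in> K then F j else - F j))"
    using False J unfolding prob_space.indep_sets_def[OF measure_pmf.prob_space_axioms] by blast
  also have "\<dots> = (\<Prod>j\<in>J. if j \<in> K then measure_pmf.prob D (F j) else 1 - measure_pmf.prob D (F j))"
    using measure_pmf.prob_compl[of "F _" D] by (intro prod.cong) (auto simp: Compl_eq_Diff_UNIV)
  finally show ?thesis .
qed simp

lemma between_iff_mem_Inter:
  assumes "m \<subseteq> S" "m1 \<subseteq> m2"
  shows "m1 \<subseteq> m \<and> m \<subseteq> m2 \<longleftrightarrow>
         m \<in> (\<Inter>j\<in>m1 \<union> (S - m2). if j \<in> m1 then {m. j \<in> m} else - {m. j \<in> m})"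
    (is "_ \<longleftrightarrow> m \<in> (\<Inter>j\<in>_. ?E j)")
proof
  assume "m \<in> (\<Inter>j\<in>m1 \<union> (S - m2). ?E j)"
  then have E: "m \<in> ?E j" if "j \<in> m1 \<union> (S - m2)" for j
    using that by blast
  have "m1 \<subseteq> m"
  proof
    fix j assume "j \<in> m1"
    then show "j \<in> m"
      using E[of j] by simp
  qed
  moreover have "m \<subseteq> m2"
  proof
    fix j assume j: "j \<in> m"
    show "j \<in> m2"
    proof (rule ccontr)
      assume "j \<notin> m2"
      then have "j \<in> S - m2" "j \<notin> m1"
        using j assms by auto
      then show False
        using E[of j] j by simp
    qed
  qed
  ultimately show "m1 \<subseteq> m \<and> m \<subseteq> m2" ..
next
  assume m: "m1 \<subseteq> m \<and> m \<subseteq> m2"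
  then have "m \<in> ?E j" if "j \<in> m1 \<union> (S - m2)" for j
    using that by auto
  then show "m \<in> (\<Inter>j\<in>m1 \<union> (S - m2). ?E j)"
    by blast
qed

lemma prob_between_eq_prod_indep:
  fixes D :: "'a set pmf"
  assumes supp: "\<forall>m\<in>set_pmf D. m \<subseteq> S"
    and indep: "prob_space.indep_events (measure_pmf D) (\<lambda>j. {m. j \<in> m}) S"
    and S: "finite S" and m12: "m1 \<subseteq> m2" "m2 \<subseteq> S"
  shows "measure_pmf.prob D {m. m1 \<subseteq> m \<and> m \<subseteq> m2}
       = (\<Prod>j\<in>m1. measure_pmf.prob D {m. j \<in> m}) * (\<Prod>j\<in>S - m2. 1 - measure_pmf.prob D {m. j \<in> m})"
proof -
  let ?E = "\<lambda>j. if j \<in> m1 then {m. j \<in> m} else - {m. j \<in> m}"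
  let ?\<pi> = "\<lambda>j. measure_pmf.prob D {m. j \<in> m}"
  have fin: "finite m1" "finite (S - m2)"
    using S m12 by (auto intro: finite_subset)
  have "{m. m1 \<subseteq> m \<and> m \<subseteq> m2} \<inter> set_pmf D = (\<Inter>j\<in>m1 \<union> (S - m2). ?E j) \<inter> set_pmf D"
  proof (rule set_eqI)
    fix m
    have "m \<in> set_pmf D \<Longrightarrow> m1 \<subseteq> m \<and> m \<subseteq> m2 \<longleftrightarrow> m \<in> (\<Inter>j\<in>m1 \<union> (S - m2). ?E j)"
      using supp by (intro between_iff_mem_Inter m12(1)) auto
    then show "m \<in> {m. m1 \<subseteq> m \<and> m \<subseteq> m2} \<inter> set_pmf D \<longleftrightarrow> m \<in> (\<Inter>j\<in>m1 \<union> (S - m2). ?E j) \<inter> set_pmf D"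
      by (simp only: Int_iff mem_Collect_eq) iprover
  qed
  then have "measure_pmf.prob D {m. m1 \<subseteq> m \<and> m \<subseteq> m2} = measure_pmf.prob D (\<Inter>j\<in>m1 \<union> (S - m2). ?E j)"
    by (subst (1 2) measure_Int_set_pmf[symmetric]) (simp only:)
  also have "\<dots> = (\<Prod>j\<in>m1 \<union> (S - m2). if j \<in> m1 then ?\<pi> j else 1 - ?\<pi> j)"
    using fin m12 by (intro prob_Inter_indep_events_or_compl[OF indep]) auto
  also have "\<dots> = (\<Prod>j\<in>m1. ?\<pi> j) * (\<Prod>j\<in>S - m2. 1 - ?\<pi> j)"
    using fin m12 by (subst prod.union_disjoint) (auto intro!: prod.cong)
  finally show ?thesis .
qed

lemma prod_le_prod_exchange:
  fixes f :: "'a \<Rightarrow> real"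
  assumes fin: "finite S" "finite A" and card: "card S = card A"
    and le: "\<And>x y. x \<in> S - A \<Longrightarrow> y \<in> A - S \<Longrightarrow> f x \<le> f y"
    and nonneg: "\<And>x. x \<in> S \<union> A \<Longrightarrow> 0 \<le> f x"
  shows "prod f S \<le> prod f A"
proof -
  have "card (S - A) = card (A - S)"
    using fin card by (simp add: card_Diff_subset_Int Int_commute)
  then obtain h where h: "bij_betw h (S - A) (A - S)"
    using fin by (meson finite_Diff finite_same_card_bij)
  have "prod f (S - A) \<le> prod (\<lambda>x. f (h x)) (S - A)"
    using bij_betw_apply[OF h] le nonneg by (intro prod_mono) auto
  also have "\<dots> = prod f (A - S)"
    using h by (rule prod.reindex_bij_betw)
  finally have "prod f (S \<inter> A) * prod f (S - A) \<le> prod f (S \<inter> A) * prod f (A - S)"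
    using nonneg by (intro mult_left_mono prod_nonneg) auto
  then show ?thesis
    using fin by (simp add: prod.Int_Diff[of S f A] prod.Int_Diff[of A f S] Int_commute)
qed

lemma
  assumes "bij_betw v {1..p} {1..p}" "n \<le> p"
  shows card_prefix_image: "card (v ` {1..n}) = n"
    and prefix_image_subset: "v ` {1..n} \<subseteq> {1..p}"
  using assms by (auto simp: bij_betw_def card_image inj_on_subset)

lemma prefix_dominates_rest:
  fixes q :: "nat \<Rightarrow> real"
  assumes v: "bij_betw v {1..p} {1..p}"
    and ord: "\<forall>i j. 1 \<le> i \<and> i < j \<and> j \<le> p \<longrightarrow> q (v j) \<le> q (v i)"
    and x: "x \<in> v ` {1..n}" and y: "y \<in> {1..p} - v ` {1..n}"
  shows "q y \<le> q x"
proof -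
  obtain i where i: "i \<in> {1..n}" "x = v i"
    using x by auto
  have "y \<in> v ` {1..p}"
    using y v by (simp add: bij_betw_def)
  then obtain j where j: "j \<in> {1..p}" "y = v j"
    by blast
  have "i < j"
    using i j y by (cases "j \<le> n") auto
  then show ?thesis
    using ord i j by auto
qed

lemma prefix_pair_maximizes_prod:
  fixes q :: "nat \<Rightarrow> real"
  assumes q01: "\<forall>j\<in>{1..p}. 0 \<le> q j \<and> q j \<le> 1"
    and v: "bij_betw v {1..p} {1..p}"
    and ord: "\<forall>i j. 1 \<le> i \<and> i < j \<and> j \<le> p \<longrightarrow> q (v j) \<le> q (v i)"
    and m12: "m1 \<subseteq> m2" "m2 \<subseteq> {1..p}"
  shows "(\<Prod>j\<in>m1. q j) * (\<Prod>j\<in>{1..p} - m2. 1 - q j)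
       \<le> (\<Prod>j\<in>v ` {1..card m1}. q j) * (\<Prod>j\<in>{1..p} - v ` {1..card m2}. 1 - q j)"
proof -
  have fin: "finite m1" "finite m2"
    using m12 by (auto intro: finite_subset)
  have card: "card m1 \<le> p" "card m2 \<le> p"
    using m12 card_mono[of "{1..p}"] by auto
  note prefix = card_prefix_image[OF v] prefix_image_subset[OF v]
  have top_sub: "v ` {1..card m1} \<subseteq> {1..p}"
    using prefix card by simp
  have top: "(\<Prod>j\<in>m1. q j) \<le> (\<Prod>j\<in>v ` {1..card m1}. q j)"
  proof (rule prod_le_prod_exchange)
    show "card m1 = card (v ` {1..card m1})"
      using prefix card by simp
    show "q x \<le> q y" if "x \<in> m1 - v ` {1..card m1}" "y \<in> v ` {1..card m1} - m1" for x y
      using that m12 by (intro prefix_dominates_rest[OF v ord]) auto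
    show "0 \<le> q x" if "x \<in> m1 \<union> v ` {1..card m1}" for x
      using that m12 top_sub q01 by blast
  qed (use fin in auto)
  have bottom: "(\<Prod>j\<in>{1..p} - m2. 1 - q j) \<le> (\<Prod>j\<in>{1..p} - v ` {1..card m2}. 1 - q j)"
  proof (rule prod_le_prod_exchange)
    show "card ({1..p} - m2) = card ({1..p} - v ` {1..card m2})"
      using prefix card m12 fin by (simp add: card_Diff_subset)
    show "1 - q x \<le> 1 - q y"
      if "x \<in> ({1..p} - m2) - ({1..p} - v ` {1..card m2})"
        and "y \<in> ({1..p} - v ` {1..card m2}) - ({1..p} - m2)" for x y
      using that prefix_dominates_rest[OF v ord, of x "card m2" y] by auto
  qed (use q01 in auto)
  show ?thesis
    using q01 m12 top_sub by (intro mult_mono[OF top bottom] prod_nonneg) auto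
qed

lemma le_of_close_approx_le:
  fixes f \<pi> :: "'a \<Rightarrow> real"
  assumes close: "\<forall>j\<in>S. \<bar>f j - \<pi> j\<bar> < \<delta>"
    and gap: "\<forall>i\<in>S. \<forall>j\<in>S. \<pi> j < \<pi> i \<longrightarrow> 2 * \<delta> < \<pi> i - \<pi> j"
    and "x \<in> S" "y \<in> S" "f x \<le> f y"
  shows "\<pi> x \<le> \<pi> y"
proof (rule ccontr)
  assume "\<not> \<pi> x \<le> \<pi> y"
  then have "2 * \<delta> < \<pi> x - \<pi> y"
    using gap assms(3,4) by auto
  moreover have "\<bar>f x - \<pi> x\<bar> < \<delta>" "\<bar>f y - \<pi> y\<bar> < \<delta>"
    using close assms(3,4) by auto
  ultimately show False
    using assms(5) unfolding abs_less_iff by linarith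
qed

lemma finite_min_positive_gap:
  fixes \<pi> :: "'a \<Rightarrow> real"
  assumes "finite S"
  obtains g where "g > 0" "\<forall>i\<in>S. \<forall>j\<in>S. \<pi> j < \<pi> i \<longrightarrow> g \<le> \<pi> i - \<pi> j"
proof
  let ?G = "{\<pi> i - \<pi> j | i j. i \<in> S \<and> j \<in> S \<and> \<pi> j < \<pi> i}"
  have "?G \<subseteq> (\<lambda>(i, j). \<pi> i - \<pi> j) ` (S \<times> S)"
    by auto
  then have "finite ?G"
    by (rule finite_subset) (use assms in auto)
  then show "Min (insert 1 ?G) > 0"
    by (subst Min_gr_iff) auto
  show "\<forall>i\<in>S. \<forall>j\<in>S. \<pi> j < \<pi> i \<longrightarrow> Min (insert 1 ?G) \<le> \<pi> i - \<pi> j"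
    using \<open>finite ?G\<close> by (auto intro: Min_le)
qed

lemma coverage_rate_gap_lt_of_close_estimates:
  fixes D :: "nat set pmf"
  defines "\<pi> j \<equiv> measure_pmf.prob D {m. j \<in> m}"
  assumes supp: "\<forall>m\<in>set_pmf D. m \<subseteq> {1..p}"
    and indep: "prob_space.indep_events (measure_pmf D) (\<lambda>j. {m. j \<in> m}) {1..p}"
    and a: "a1 \<subseteq> a2" "a2 \<subseteq> {1..p}" "card a2 - card a1 = w"
    and a_max: "\<forall>m1 m2. m1 \<subseteq> m2 \<and> m2 \<subseteq> {1..p} \<and> card m2 - card m1 = w \<longrightarrow>
                  cov_rate B ms m1 m2 \<le> cov_rate B ms a1 a2"
    and v: "bij_betw v {1..p} {1..p}"
    and v_order: "\<forall>i j. 1 \<le> i \<and> i < j \<and> j \<le> p \<longrightarrow> incl_freq B ms (v j) \<le> incl_freq B ms (v i)"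
    and ks: "ks \<le> p - w"
    and ks_max: "\<forall>k. k \<le> p - w \<longrightarrow>
                  cov_rate B ms (v ` {1..k}) (v ` {1..k + w}) \<le> cov_rate B ms (v ` {1..ks}) (v ` {1..ks + w})"
    and close: "\<forall>A\<in>coverage_events p. \<bar>emp_prob B ms A - measure_pmf.prob D A\<bar> < \<delta>"
    and gap: "\<forall>i\<in>{1..p}. \<forall>j\<in>{1..p}. \<pi> j < \<pi> i \<longrightarrow> 2 * \<delta> < \<pi> i - \<pi> j"
  shows "\<bar>cov_rate B ms a1 a2 - cov_rate B ms (v ` {1..ks}) (v ` {1..ks + w})\<bar> < 2 * \<delta>"
proof -
  let ?c = "cov_rate B ms"
  let ?r = "\<lambda>m1 m2. measure_pmf.prob D {m. m1 \<subseteq> m \<and> m \<subseteq> m2}"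
  have cov_close: "\<bar>?c m1 m2 - ?r m1 m2\<bar> < \<delta>" if "m1 \<subseteq> {1..p}" "m2 \<subseteq> {1..p}" for m1 m2
    using close that by (auto simp: coverage_events_def cov_rate_eq_emp_prob)
  have freq_close: "\<forall>j\<in>{1..p}. \<bar>incl_freq B ms j - \<pi> j\<bar> < \<delta>"
    using close by (auto simp: coverage_events_def incl_freq_eq_emp_prob \<pi>_def)
  define k where "k = card a1"
  have "card a1 \<le> card a2" "card a2 \<le> p"
    using a card_mono[of "{1..p}"] card_mono[of a2] finite_subset[of a2 "{1..p}"] by auto
  then have card_a2: "card a2 = k + w" and kw: "k + w \<le> p"
    using a(3) k_def by auto
  then have ksw: "ks + w \<le> p"
    using ks by linarith
  note prefix = card_prefix_image[OF v] prefix_image_subset[OF v]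
  have "?c (v ` {1..ks}) (v ` {1..ks + w}) \<le> ?c a1 a2"
    using prefix[of ks] prefix[of "ks + w"] ksw by (intro a_max[rule_format]) auto
  moreover have "?c (v ` {1..k}) (v ` {1..k + w}) \<le> ?c (v ` {1..ks}) (v ` {1..ks + w})"
    using ks_max kw by auto
  moreover have "?r a1 a2 \<le> ?r (v ` {1..k}) (v ` {1..k + w})"
  proof -
    have "\<pi> (v j) \<le> \<pi> (v i)" if "1 \<le> i" "i < j" "j \<le> p" for i j
      using that v_order v by (intro le_of_close_approx_le[OF freq_close gap]) (auto simp: bij_betw_def)
    then have "(\<Prod>j\<in>a1. \<pi> j) * (\<Prod>j\<in>{1..p} - a2. 1 - \<pi> j)
        \<le> (\<Prod>j\<in>v ` {1..k}. \<pi> j) * (\<Prod>j\<in>{1..p} - v ` {1..k + w}. 1 - \<pi> j)"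
      using prefix_pair_maximizes_prod[OF _ v _ a(1,2), of \<pi>] card_a2 k_def
      by (simp add: \<pi>_def)
    moreover have "v ` {1..k} \<subseteq> v ` {1..k + w}"
      by auto
    ultimately show ?thesis
      using prefix[of "k + w"] kw a
      by (simp add: \<pi>_def prob_between_eq_prod_indep[OF supp indep])
  qed
  moreover have "\<bar>?c a1 a2 - ?r a1 a2\<bar> < \<delta>"
    using cov_close a by blast
  moreover have "\<bar>?c (v ` {1..k}) (v ` {1..k + w}) - ?r (v ` {1..k}) (v ` {1..k + w})\<bar> < \<delta>"
    using cov_close prefix[of k] prefix[of "k + w"] kw by simp
  ultimately show ?thesis
    unfolding abs_less_iff by linarith
qed

theorem theorem2:
  fixes p w :: nat
    and D :: "nat set pmf"
    and alg1 :: "nat \<Rightarrow> (nat \<Rightarrow> nat set) \<Rightarrow> nat set \<times> nat set"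
    and u :: "nat \<Rightarrow> (nat \<Rightarrow> nat set) \<Rightarrow> nat \<Rightarrow> nat"
    and kstar :: "nat \<Rightarrow> (nat \<Rightarrow> nat set) \<Rightarrow> nat"
  assumes w_le: "w \<le> p"
    and D_supp: "\<forall>m \<in> set_pmf D. m \<subseteq> {1..p}"
    and A3: "prob_space.indep_events (measure_pmf D) (\<lambda>j. {m. j \<in> m}) {1..p}"
    and alg1_feas: "\<forall>B ms. fst (alg1 B ms) \<subseteq> snd (alg1 B ms) \<and> snd (alg1 B ms) \<subseteq> {1..p}
                        \<and> card (snd (alg1 B ms)) - card (fst (alg1 B ms)) = w"
    and alg1_max: "\<forall>B ms m1 m2. m1 \<subseteq> m2 \<and> m2 \<subseteq> {1..p} \<and> card m2 - card m1 = w \<longrightarrow>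
                        cov_rate B ms m1 m2 \<le> cov_rate B ms (fst (alg1 B ms)) (snd (alg1 B ms))"
    and u_perm: "\<forall>B ms. bij_betw (u B ms) {1..p} {1..p}"
    and u_order: "\<forall>B ms i j. 1 \<le> i \<and> i < j \<and> j \<le> p \<longrightarrow>
                        incl_freq B ms (u B ms j) \<le> incl_freq B ms (u B ms i)"
    and kstar_range: "\<forall>B ms. kstar B ms \<le> p - w"
    and kstar_max: "\<forall>B ms k. k \<le> p - w \<longrightarrow>
                        cov_rate B ms (u B ms ` {1..k}) (u B ms ` {1..k+w})
                        \<le> cov_rate B ms (u B ms ` {1..kstar B ms}) (u B ms ` {1..kstar B ms + w})"
  shows "\<forall>\<epsilon>>0. (\<lambda>B. measure_pmf.prob (boot_sample D B)
            {ms. \<bar>cov_rate B ms (fst (alg1 B ms)) (snd (alg1 B ms))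
                 - cov_rate B ms (u B ms ` {1..kstar B ms}) (u B ms ` {1..kstar B ms + w})\<bar> > \<epsilon>})
          \<longlonglongrightarrow> 0"
proof (intro allI impI)
  fix \<epsilon> :: real assume "\<epsilon> > 0"
  let ?\<pi> = "\<lambda>j. measure_pmf.prob D {m. j \<in> m}"
  obtain g where "g > 0" and g: "\<forall>i\<in>{1..p}. \<forall>j\<in>{1..p}. ?\<pi> j < ?\<pi> i \<longrightarrow> g \<le> ?\<pi> i - ?\<pi> j"
    using finite_min_positive_gap[of "{1..p}" ?\<pi>] by auto
  define \<delta> where "\<delta> = min (\<epsilon> / 2) (g / 3)"
  have "\<delta> > 0" "2 * \<delta> \<le> \<epsilon>" and gap: "\<forall>i\<in>{1..p}. \<forall>j\<in>{1..p}. ?\<pi> j < ?\<pi> i \<longrightarrow> 2 * \<delta> < ?\<pi> i - ?\<pi> j"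
    using \<open>\<epsilon> > 0\<close> \<open>g > 0\<close> g by (fastforce simp: \<delta>_def)+
  let ?Bad = "\<lambda>B. {ms. \<bar>cov_rate B ms (fst (alg1 B ms)) (snd (alg1 B ms))
        - cov_rate B ms (u B ms ` {1..kstar B ms}) (u B ms ` {1..kstar B ms + w})\<bar> > \<epsilon>}"
  let ?Dev = "\<lambda>B. {ms. \<exists>A\<in>coverage_events p. \<delta> \<le> \<bar>emp_prob B ms A - measure_pmf.prob D A\<bar>}"
  have "?Bad B \<subseteq> ?Dev B" for B
  proof (intro subsetI CollectI, rule ccontr)
    fix ms assume "ms \<in> ?Bad B" and "\<not> (\<exists>A\<in>coverage_events p. \<delta> \<le> \<bar>emp_prob B ms A - measure_pmf.prob D A\<bar>)"
    moreover from this have "\<bar>cov_rate B ms (fst (alg1 B ms)) (snd (alg1 B ms))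
        - cov_rate B ms (u B ms ` {1..kstar B ms}) (u B ms ` {1..kstar B ms + w})\<bar> < 2 * \<delta>"
      using alg1_feas alg1_max u_perm u_order kstar_range kstar_max gap
      by (intro coverage_rate_gap_lt_of_close_estimates[OF D_supp A3]) (auto simp: not_le)
    ultimately show False
      using \<open>2 * \<delta> \<le> \<epsilon>\<close> by simp
  qed
  then have le: "norm (measure_pmf.prob (boot_sample D B) (?Bad B))
      \<le> measure_pmf.prob (Pi_pmf {..<B} {} (\<lambda>_. D)) (?Dev B)" for B
    unfolding boot_sample_def real_norm_def abs_of_nonneg[OF measure_nonneg]
    by (rule measure_pmf.finite_measure_mono) simp
  show "(\<lambda>B. measure_pmf.prob (boot_sample D B) (?Bad B)) \<longlonglongrightarrow> 0"
    by (rule Lim_null_comparison[OF always_eventually[OF allI[OF le]]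
          uniform_emp_prob_deviation_tendsto_0[OF finite_coverage_events \<open>\<delta> > 0\<close>]])
qed

end
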